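(* Let $\mathcal K=\{\mathbf x\in\mathbb R^n : \mathbf k_i^T\mathbf x\ge 0,\ i=1,\dots,p\}$ be a polyhedral cone with non-empty topological interior, where each $\mathbf k_i$ has unit Euclidean length. Define linear programs as follows. Problem $P_0$: maximize $z$ over $(\mathbf x,z)\in\mathbb R^n\times\mathbb R$ subject to $\mathbf k_i^T\mathbf x\ge z$ for all $i$ and $-1\le x_i\le 1$ for all $i=1,\dots,n$. Given Problem $P_\ell$, let $(\mathbf x_\ell,z_\ell)$ be an (arbitrarily chosen) optimal solution of $P_\ell$, let $\mathbf u_\ell=\mathbf x_\ell/\|\mathbf x_\ell\|$, and let Problem $P_{\ell+1}$ be Problem $P_\ell$ with the additional constraint $\mathbf u_\ell^T\mathbf x\le 1$. Then for any $\ell\ge 0$ and any $r$ with $0\le r<\|\mathbf x_\ell-\mathbf u_\ell\|$, the ball $B_r(\mathbf x_\ell)$ is disjoint from the feasible set of Problem $P_{\ell+1}$, i.e. there is no feasible point $(\mathbf x,z)$ of $P_{\ell+1}$ with $\mathbf x\in B_r(\mathbf x_\ell)$.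
   Context: $B_r(\mathbf x)=\{\mathbf y\in\mathbb R^n:\|\mathbf x-\mathbf y\|\le r\}$ denotes the closed ball, with $\|\cdot\|$ the Euclidean norm. (For each $\ell$, problem $P_\ell$ has an optimal solution and $\|\mathbf x_\ell\|\ge 1$, so $\mathbf u_\ell$ is well defined.) *)

theory Defs
  imports "HOL-Analysis.Analysis"
begin

definition polycone :: "nat \<Rightarrow> (nat \<Rightarrow> real^'n::finite) \<Rightarrow> (real^'n::finite) set" where
  "polycone p k = {x. \<forall>i<p. k i \<bullet> x \<ge> 0}"

definition feasLP :: "nat \<Rightarrow> (nat \<Rightarrow> real^'n::finite) \<Rightarrow> (nat \<Rightarrow> real^'n::finite) \<Rightarrow> nat \<Rightarrow> ((real^'n::finite) \<times> real) set" where
  "feasLP p k u l = {(x, z). (\<forall>i<p. k i \<bullet> x \<ge> z) \<and> (\<forall>j. -1 \<le> x $ j \<and> x $ j \<le> 1)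
                          \<and> (\<forall>j<l. u j \<bullet> x \<le> 1)}"

definition optLP :: "nat \<Rightarrow> (nat \<Rightarrow> real^'n::finite) \<Rightarrow> (nat \<Rightarrow> real^'n::finite) \<Rightarrow> nat \<Rightarrow> real^'n::finite \<Rightarrow> real \<Rightarrow> bool" where
  "optLP p k u l x z \<longleftrightarrow> (x, z) \<in> feasLP p k u l \<and> (\<forall>(x', z') \<in> feasLP p k u l. z' \<le> z)"

end

theory Submission
  imports Defs
begin

text \<open>The cut \<open>u\<^sub>\<ell> \<bullet> x \<le> 1\<close> added in \<open>P\<^sub>\<ell>\<^sub>+\<^sub>1\<close> already separates: every point within distance
  \<open>r\<close> of \<open>x\<^sub>\<ell>\<close> has \<open>u\<^sub>\<ell> \<bullet> x \<ge> \<parallel>x\<^sub>\<ell>\<parallel> - r\<close>, and \<open>\<parallel>x\<^sub>\<ell> - u\<^sub>\<ell>\<parallel> = \<parallel>x\<^sub>\<ell>\<parallel> - 1\<close>, so \<open>r < \<parallel>x\<^sub>\<ell> - u\<^sub>\<ell>\<parallel>\<close> forces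
  \<open>u\<^sub>\<ell> \<bullet> x > 1\<close>.\<close>

lemma inner_sgn_ge_norm_minus_dist:
  fixes v y :: "'a::real_inner"
  assumes "dist v y \<le> r"
  shows "norm v - r \<le> sgn v \<bullet> y"
proof -
  have "\<bar>sgn v \<bullet> (y - v)\<bar> \<le> norm (sgn v) * norm (y - v)"
    by (rule Cauchy_Schwarz_ineq2)
  also have "\<dots> \<le> norm (y - v)"
    by (simp add: norm_sgn mult_le_one)
  also have "\<dots> \<le> r"
    using assms by (simp add: dist_norm norm_minus_commute)
  finally have "- r \<le> sgn v \<bullet> (y - v)"
    by linarith
  moreover have "sgn v \<bullet> v = norm v"
    by (cases "v = 0") (simp_all add: sgn_div_norm dot_square_norm power2_eq_square)
  ultimately show ?thesis
    by (simp add: inner_diff_right)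
qed

lemma norm_minus_sgn:
  fixes v :: "'a::real_normed_vector"
  assumes "1 \<le> norm v"
  shows "norm (v - sgn v) = norm v - 1"
proof -
  have "v \<noteq> 0"
    using assms by auto
  have "v - sgn v = (1 - 1 / norm v) *\<^sub>R v"
    by (simp add: sgn_div_norm algebra_simps divide_inverse)
  then have "norm (v - sgn v) = \<bar>1 - 1 / norm v\<bar> * norm v"
    by simp
  also have "\<dots> = (1 - 1 / norm v) * norm v"
    using assms by (simp add: divide_le_eq_1)
  also have "\<dots> = norm v - 1"
    using \<open>v \<noteq> 0\<close> by (simp add: left_diff_distrib)
  finally show ?thesis .
qed

lemma feasLP_Suc_cut:
  assumes "(x, z) \<in> feasLP p k u (Suc l)"
  shows "u l \<bullet> x \<le> 1"
  using assms unfolding feasLP_def by auto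

theorem lemma1:
  fixes p :: nat and k :: "nat \<Rightarrow> real^'n"
    and xs :: "nat \<Rightarrow> real^'n" and zs :: "nat \<Rightarrow> real"
  assumes unit: "\<And>i. i < p \<Longrightarrow> norm (k i) = 1"
    and int: "interior (polycone p k) \<noteq> {}"
    and opt: "\<And>l. optLP p k (\<lambda>j. xs j /\<^sub>R norm (xs j)) l (xs l) (zs l)"
    and nrm: "\<And>l. norm (xs l) \<ge> 1"
  shows "\<forall>l r. 0 \<le> r \<and> r < norm (xs l - xs l /\<^sub>R norm (xs l)) \<longrightarrow>
           \<not> (\<exists>x z. (x, z) \<in> feasLP p k (\<lambda>j. xs j /\<^sub>R norm (xs j)) (Suc l) \<and> x \<in> cball (xs l) r)"
proof (intro allI impI notI)
  fix l r
  assume "0 \<le> r \<and> r < norm (xs l - xs l /\<^sub>R norm (xs l))"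
  then have r_lt: "r < norm (xs l) - 1"
    using norm_minus_sgn[OF nrm] by (simp add: sgn_div_norm)
  assume "\<exists>x z. (x, z) \<in> feasLP p k (\<lambda>j. xs j /\<^sub>R norm (xs j)) (Suc l) \<and> x \<in> cball (xs l) r"
  then obtain x z where feas: "(x, z) \<in> feasLP p k (\<lambda>j. xs j /\<^sub>R norm (xs j)) (Suc l)"
    and near: "dist (xs l) x \<le> r"
    by auto
  have "sgn (xs l) \<bullet> x \<le> 1"
    using feasLP_Suc_cut[OF feas] by (simp add: sgn_div_norm)
  moreover have "norm (xs l) - r \<le> sgn (xs l) \<bullet> x"
    using near by (rule inner_sgn_ge_norm_minus_dist)
  ultimately show False
    using r_lt by linarith
qed

end
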